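(* Let $G=A_{n,k}$ be an almost-path graph and let $\mathcal{I}$ be a lower order ideal in the poset (ordered by inclusion) of vertex sets $\varnothing\neq I\subseteq[n+1]$ with $G[I]$ connected. Then the ideal subarrangement $\mathcal{A}_{\mathcal{I}}:=\{H_I\mid I\in\mathcal{I}\}$ of $\mathcal{A}_G$ is MAT-free.
   Context: For $1\le k\le n$, the almost-path graph $A_{n,k}$ has vertex set $[n+1]$ and edges $\{i,i+1\}$ for $1\le i\le n-1$ together with $\{k,n+1\}$. For a graph $G$ on $[m]$, $H_I:=\ker(\sum_{i\in I}x_i)\subseteq\mathbb{Q}^m$ and $\mathcal{A}_G:=\{H_I\mid\varnothing\neq I\subseteq[m],\ G[I]\text{ connected}\}$. An arrangement $\mathcal{A}$ in $V$ is MAT-free if there is an ordered partition $(\pi_1|\dots|\pi_r)$ of $\mathcal{A}$ such that, with $\mathcal{A}_0:=\varnothing$ and $\mathcal{A}_k:=\pi_1\cup\dots\cup\pi_k$, for every $0\le k\le r-1$: (1) the hyperplanes of $\pi_{k+1}$ are linearly independent (rank $|\pi_{k+1}|$); (2) $\bigcap_{H\in\pi_{k+1}}H\not\subseteq\bigcup_{H'\in\mathcal{A}_k}H'$; (3) $|\mathcal{A}_k|-|\{H\cap H'\mid H'\in\mathcal{A}_k\}|=k$ for each $H\in\pi_{k+1}$. *)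

theory Defs
  imports Complex_Main
begin

text \<open>Ambient space Q^m, realised as functions nat => rat supported on {1..m}.\<close>
definition ambient :: "nat \<Rightarrow> (nat \<Rightarrow> rat) set" where
  "ambient m = {x. \<forall>i. i \<notin> {1..m} \<longrightarrow> x i = 0}"

definition hyp :: "nat \<Rightarrow> (nat \<Rightarrow> rat) \<Rightarrow> (nat \<Rightarrow> rat) set" where
  "hyp m a = {x \<in> ambient m. (\<Sum>i=1..m. a i * x i) = 0}"

definition H_of :: "nat \<Rightarrow> nat set \<Rightarrow> (nat \<Rightarrow> rat) set" where
  "H_of m I = {x \<in> ambient m. (\<Sum>i\<in>I. x i) = 0}"

definition lin_indep_forms :: "nat \<Rightarrow> (nat \<Rightarrow> rat) set \<Rightarrow> bool" where
  "lin_indep_forms m S \<longleftrightarrow> finite S \<and>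
     (\<forall>c :: (nat \<Rightarrow> rat) \<Rightarrow> rat. (\<forall>j\<in>{1..m}. (\<Sum>a\<in>S. c a * a j) = 0) \<longrightarrow> (\<forall>a\<in>S. c a = 0))"

text \<open>A set of hyperplanes in Q^m is linearly independent (has rank equal to its cardinality):
  one can choose defining forms, one per hyperplane, which are linearly independent.\<close>
definition indep_hyps :: "nat \<Rightarrow> (nat \<Rightarrow> rat) set set \<Rightarrow> bool" where
  "indep_hyps m P \<longleftrightarrow> (\<exists>f. inj_on f P \<and>
     (\<forall>H\<in>P. f H \<in> ambient m \<and> f H \<noteq> (\<lambda>_. 0) \<and> H = hyp m (f H)) \<and>
     lin_indep_forms m (f ` P))"

definition ordered_partition :: "'a set \<Rightarrow> 'a set list \<Rightarrow> bool" where
  "ordered_partition A ps \<longleftrightarrow> (\<forall>p\<in>set ps. p \<noteq> {}) \<and>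
     (\<forall>i<length ps. \<forall>j<length ps. i \<noteq> j \<longrightarrow> ps!i \<inter> ps!j = {}) \<and> \<Union>(set ps) = A"

definition MAT_free :: "nat \<Rightarrow> (nat \<Rightarrow> rat) set set \<Rightarrow> bool" where
  "MAT_free m A \<longleftrightarrow> (\<exists>ps. ordered_partition A ps \<and>
     (\<forall>k < length ps.
        let Ak = \<Union>(set (take k ps)); p = ps ! k in
        indep_hyps m p \<and>
        \<not> (ambient m \<inter> \<Inter>p \<subseteq> \<Union>Ak) \<and>
        (\<forall>H\<in>p. card Ak - card ((\<lambda>H'. H \<inter> H') ` Ak) = k)))"

definition almost_path_adj :: "nat \<Rightarrow> nat \<Rightarrow> nat \<Rightarrow> nat \<Rightarrow> bool" where
  "almost_path_adj n k u v \<longleftrightarrow>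
     (1 \<le> u \<and> u \<le> n - 1 \<and> v = u + 1) \<or> (1 \<le> v \<and> v \<le> n - 1 \<and> u = v + 1) \<or>
     (u = k \<and> v = n + 1) \<or> (v = k \<and> u = n + 1)"

definition induced_connected :: "(nat \<Rightarrow> nat \<Rightarrow> bool) \<Rightarrow> nat set \<Rightarrow> bool" where
  "induced_connected E I \<longleftrightarrow> I \<noteq> {} \<and>
     (\<forall>u\<in>I. \<forall>v\<in>I. (u, v) \<in> {(a, b). a \<in> I \<and> b \<in> I \<and> E a b}\<^sup>*)"

definition conn_sets :: "nat \<Rightarrow> nat \<Rightarrow> nat set set" where
  "conn_sets n k = {I. I \<subseteq> {1..n+1} \<and> induced_connected (almost_path_adj n k) I}"

end

(*
  The blocks of the partition are the levels pi_s = {H_I | I in the ideal, |I| = s}.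
  A connected vertex set of A_{n,k} is an interval [a,b] of the path [n], the root {n+1},
  or a star {n+1} u [a,b] with a <= k <= b.

  (1) Indicator vectors of connected sets of equal size s are linearly independent: they
  admit triangular dual vectors, the unit vector at min I for an interval I and, for a
  star, the weight that gives mass s to the residue class mod s just above the star.
  (2) The weight w_j = s [j <= n, j = k mod s] - 1 on [n+1] sums to zero over a connected
  set of size at most s exactly when the size is s, so it lies on pi_s but off A_{s-1}.
  (3) For |I| = s and distinct J, J' of smaller size, H_I cap H_J = H_I cap H_J' iff
  {J, J'} is a partition of I. A connected I induces a tree, so it has exactly s - 1
  partitions into two connected parts, and these are the coincidences counted in (3).
*)
theory Submission
  imports Defs "HOL-Library.Indicator_Function"
begin

section \<open>Coordinate hyperplanes\<close>

lemma indicator_in_ambient: "I \<subseteq> {1..m} \<Longrightarrow> (indicator I :: nat \<Rightarrow> rat) \<in> ambient m"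
  unfolding ambient_def by (auto simp: indicator_def)

lemma H_of_eq_hyp_indicator: "I \<subseteq> {1..m} \<Longrightarrow> H_of m I = hyp m (indicator I)"
  unfolding hyp_def H_of_def by (simp add: Int_absorb1)

lemma unit_vector_in_H_of_iff:
  assumes "finite I" "p \<in> {1..m}"
  shows "indicator {p} \<in> H_of m I \<longleftrightarrow> p \<notin> I"
  using assms indicator_in_ambient[of "{p}" m] by (auto simp: H_of_def indicator_def)

lemma H_of_eq_iff:
  assumes "I \<subseteq> {1..m}" "J \<subseteq> {1..m}"
  shows "H_of m I = H_of m J \<longleftrightarrow> I = J"
proof
  assume "H_of m I = H_of m J"
  then have "p \<in> I \<longleftrightarrow> p \<in> J" if "p \<in> {1..m}" for p
    using unit_vector_in_H_of_iff that assms finite_subset by (metis finite_atLeastAtMost)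
  then show "I = J" using assms by blast
qed simp

lemma sum_indicator_singleton:
  "finite S \<Longrightarrow> (\<Sum>i\<in>S. indicator {q} i :: 'a::{comm_monoid_add,zero_neq_one}) = indicator S q"
  by (simp add: indicator_def of_bool_def sum.delta')

lemma H_of_Int_subset_imp_split:
  assumes sub: "I \<subseteq> {1..m}" "J \<subseteq> {1..m}" "J' \<subseteq> {1..m}"
    and H: "H_of m I \<inter> H_of m J \<subseteq> H_of m J'"
    and "\<not> I \<subseteq> J'" "\<not> J' \<subseteq> J"
  shows "J \<inter> J' = {} \<and> J \<union> J' = I"
proof -
  have fin: "finite I" "finite J" "finite J'" using sub by (auto intro: finite_subset)
  have test: "(\<Sum>i\<in>J'. x i) = 0"
    if "x \<in> ambient m" "(\<Sum>i\<in>I. x i) = 0" "(\<Sum>i\<in>J. x i) = 0" for x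
    using H that unfolding H_of_def by blast
  have amb: "(\<lambda>i. indicator {q} i - indicator {q'} i) \<in> ambient m"
    "(\<lambda>i. indicator {a} i - indicator {q} i - indicator {q'} i) \<in> ambient m"
    if "q \<in> {1..m}" "q' \<in> {1..m}" "a \<in> {1..m}" for q q' a
    using that unfolding ambient_def by auto
  have unit: "q \<in> I \<or> q \<in> J" if "q \<in> J'" for q
  proof -
    have "indicator {q} \<in> ambient m" using that sub(3) by (intro indicator_in_ambient) auto
    then show ?thesis
      using test[of "indicator {q}"] that fin by (auto simp: sum_indicator_singleton indicator_eq_0_iff)
  qed
  have same_type: "q' \<in> J'"
    if "q \<in> J'" "q \<in> I \<longleftrightarrow> q' \<in> I" "q \<in> J \<longleftrightarrow> q' \<in> J" "q' \<in> {1..m}" for q q'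
  proof -
    have "q \<in> {1..m}" using that(1) sub(3) by blast
    then have "indicator J' q - indicator J' q' = (0::rat)"
      using test[OF amb(1)[of q q' q]] that(2-4) fin
      by (simp add: sum_subtractf sum_indicator_singleton split: split_indicator)
    then show ?thesis using that(1) by (simp split: split_indicator_asm)
  qed
  obtain p where p: "p \<in> J'" "p \<notin> J" using assms(6) by blast
  then have "p \<in> I" using unit by blast
  have I_minus_J: "I - J \<subseteq> J'"
    using same_type[OF p(1)] p \<open>p \<in> I\<close> sub by blast
  have disj: "I \<inter> J \<inter> J' = {}"
  proof (rule ccontr)
    assume "I \<inter> J \<inter> J' \<noteq> {}"
    then obtain a where "a \<in> I" "a \<in> J" "a \<in> J'" by blast
    then have "I \<inter> J \<subseteq> J'" using same_type[of a] sub by blast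
    then show False using I_minus_J assms(5) by blast
  qed
  obtain a where a: "a \<in> I" "a \<in> J" using I_minus_J assms(5) by blast
  have "J \<subseteq> I"
  proof
    fix c assume "c \<in> J"
    show "c \<in> I"
    proof (rule ccontr)
      assume "c \<notin> I"
      \<comment> \<open>the vector \<open>e\<^sub>a - e\<^sub>p - e\<^sub>c\<close> lies on \<open>H\<^sub>I\<close> and \<open>H\<^sub>J\<close>, but not on \<open>H\<^sub>J\<^sub>'\<close>\<close>
      have "a \<in> {1..m}" "p \<in> {1..m}" "c \<in> {1..m}" using a p \<open>c \<in> J\<close> sub by blast+
      then have "indicator J' a - indicator J' p - indicator J' c = (0::rat)"
        using test[OF amb(2)[of p c a]] a p \<open>p \<in> I\<close> \<open>c \<in> J\<close> \<open>c \<notin> I\<close> fin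
        by (simp add: sum_subtractf sum_indicator_singleton split: split_indicator)
      then show False using a p disj by (auto split: split_indicator_asm)
    qed
  qed
  then show ?thesis using disj unit I_minus_J by blast
qed

lemma H_of_Int_split:
  assumes "finite I" "J \<inter> J' = {}" "J \<union> J' = I"
  shows "H_of m I \<inter> H_of m J = H_of m I \<inter> H_of m J'"
proof -
  have "(\<Sum>i\<in>I. x i) = (\<Sum>i\<in>J. x i) + (\<Sum>i\<in>J'. x i)" for x :: "nat \<Rightarrow> rat"
    using assms by (metis finite_Un sum.union_disjoint)
  then show ?thesis unfolding H_of_def by auto
qed

lemma H_of_Int_eq_iff_split:
  assumes "I \<subseteq> {1..m}" "J \<subseteq> {1..m}" "J' \<subseteq> {1..m}"
    and "\<not> I \<subseteq> J" "\<not> I \<subseteq> J'" "J \<noteq> J'"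
  shows "H_of m I \<inter> H_of m J = H_of m I \<inter> H_of m J' \<longleftrightarrow> J \<inter> J' = {} \<and> J \<union> J' = I"
proof
  assume eq: "H_of m I \<inter> H_of m J = H_of m I \<inter> H_of m J'"
  show "J \<inter> J' = {} \<and> J \<union> J' = I"
  proof (cases "J' \<subseteq> J")
    case True
    with assms(6) have "\<not> J \<subseteq> J'" by auto
    moreover from eq have "H_of m I \<inter> H_of m J' \<subseteq> H_of m J" by auto
    ultimately have "J' \<inter> J = {} \<and> J' \<union> J = I"
      by (intro H_of_Int_subset_imp_split[OF assms(1,3,2)]) (use assms(4) in auto)
    then show ?thesis by auto
  next
    case False
    moreover from eq have "H_of m I \<inter> H_of m J \<subseteq> H_of m J'" by auto
    ultimately show ?thesis
      by (intro H_of_Int_subset_imp_split[OF assms(1-3)]) (use assms(5) in auto)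
  qed
next
  assume "J \<inter> J' = {} \<and> J \<union> J' = I"
  moreover have "finite I" using assms(1) by (rule finite_subset) simp
  ultimately show "H_of m I \<inter> H_of m J = H_of m I \<inter> H_of m J'"
    by (intro H_of_Int_split) auto
qed

lemma indep_hyps_H_of:
  assumes B: "B \<subseteq> Pow {1..m}" "{} \<notin> B" "finite B"
    and indep: "\<And>d. \<forall>j\<in>{1..m}. (\<Sum>I\<in>B. d I * indicator I j) = (0::rat) \<Longrightarrow> \<forall>I\<in>B. d I = 0"
  shows "indep_hyps m (H_of m ` B)"
proof -
  have inj: "inj_on (H_of m) B"
  proof (rule inj_onI)
    fix I J assume "I \<in> B" "J \<in> B" "H_of m I = H_of m J"
    then show "I = J" using H_of_eq_iff[of I m J] B(1) by auto
  qed
  define f :: "(nat \<Rightarrow> rat) set \<Rightarrow> nat \<Rightarrow> rat"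
    where "f H = indicator (the_inv_into B (H_of m) H)" for H
  have f_H_of: "f (H_of m I) = indicator I" if "I \<in> B" for I
    unfolding f_def using the_inv_into_f_f[OF inj that] by simp
  have inj_indicator: "inj_on (indicator :: nat set \<Rightarrow> nat \<Rightarrow> rat) B"
  proof (rule inj_onI)
    fix I J assume "indicator I = (indicator J :: nat \<Rightarrow> rat)"
    then have "i \<in> I \<longleftrightarrow> i \<in> J" for i by (metis indicator_eq_1_iff)
    then show "I = J" by blast
  qed
  have forms: "f ` H_of m ` B = indicator ` B"
    by (simp add: image_image f_H_of cong: image_cong)
  have "inj_on (f \<circ> H_of m) B"
    using inj_indicator by (simp add: inj_on_def f_H_of)
  then have "inj_on f (H_of m ` B)" by (rule inj_on_imageI)
  moreover have "\<forall>H\<in>H_of m ` B. f H \<in> ambient m \<and> f H \<noteq> (\<lambda>_. 0) \<and> H = hyp m (f H)"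
  proof
    fix H assume "H \<in> H_of m ` B"
    then obtain I where I: "I \<in> B" "H = H_of m I" by blast
    then obtain i where "i \<in> I" using B(2) by (metis ex_in_conv)
    then have "indicator I \<noteq> (\<lambda>_. 0::rat)" by (metis indicator_simps(1) zero_neq_one)
    then show "f H \<in> ambient m \<and> f H \<noteq> (\<lambda>_. 0) \<and> H = hyp m (f H)"
      using I B(1) by (auto simp: f_H_of indicator_in_ambient H_of_eq_hyp_indicator)
  qed
  moreover have "lin_indep_forms m (f ` H_of m ` B)"
    unfolding forms lin_indep_forms_def
  proof (intro conjI allI impI ballI)
    fix c :: "(nat \<Rightarrow> rat) \<Rightarrow> rat" and a :: "nat \<Rightarrow> rat"
    assume "\<forall>j\<in>{1..m}. (\<Sum>a\<in>indicator ` B. c a * a j) = 0" "a \<in> indicator ` B"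
    then show "c a = 0"
      using indep[of "\<lambda>I. c (indicator I)"] by (auto simp: sum.reindex[OF inj_indicator])
  qed (use B in simp)
  ultimately show ?thesis
    unfolding indep_hyps_def by (intro exI[of _ f] conjI)
qed

lemma indicators_independent_triangular:
  fixes B :: "'a set set" and d :: "'a set \<Rightarrow> 'b::field" and rank :: "'a set \<Rightarrow> nat"
    and w :: "'a set \<Rightarrow> 'a \<Rightarrow> 'b"
  assumes B: "finite B" "finite M" "\<forall>I\<in>B. I \<subseteq> M"
    and dual_nonzero: "\<And>I. I \<in> B \<Longrightarrow> (\<Sum>j\<in>I. w I j) \<noteq> 0"
    and dual_zero: "\<And>I J. I \<in> B \<Longrightarrow> J \<in> B \<Longrightarrow> J \<noteq> I \<Longrightarrow> rank I \<le> rank J \<Longrightarrow> (\<Sum>j\<in>J. w I j) = 0"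
    and relation: "\<forall>j\<in>M. (\<Sum>I\<in>B. d I * indicator I j) = 0"
  shows "\<forall>I\<in>B. d I = 0"
proof -
  have pairing: "(\<Sum>J\<in>B. d J * (\<Sum>j\<in>J. v j)) = 0" for v :: "'a \<Rightarrow> 'b"
  proof -
    have "(\<Sum>j\<in>J. v j) = (\<Sum>j\<in>M. indicator J j * v j)" if "J \<in> B" for J
      using B that by (simp add: Int_absorb1)
    then have "(\<Sum>J\<in>B. d J * (\<Sum>j\<in>J. v j)) = (\<Sum>J\<in>B. \<Sum>j\<in>M. d J * indicator J j * v j)"
      by (simp add: sum_distrib_left mult.assoc)
    also have "\<dots> = (\<Sum>j\<in>M. (\<Sum>J\<in>B. d J * indicator J j) * v j)"
      by (subst sum.swap) (simp add: sum_distrib_right)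
    finally show ?thesis using relation by simp
  qed
  have "d I = 0" if "I \<in> B" for I
    using that
  proof (induction "rank I" arbitrary: I rule: less_induct)
    case less
    have "d J * (\<Sum>j\<in>J. w I j) = 0" if "J \<in> B" "J \<noteq> I" for J
    proof (cases "rank J < rank I")
      case True
      then show ?thesis using less.hyps that(1) by simp
    next
      case False
      then show ?thesis using dual_zero[OF less.prems that] by simp
    qed
    then have "(\<Sum>J\<in>B. d J * (\<Sum>j\<in>J. w I j)) = d I * (\<Sum>j\<in>I. w I j)"
      by (simp add: sum.remove[OF B(1) less.prems] sum.neutral)
    then show "d I = 0" using pairing[of "w I"] dual_nonzero[OF less.prems] by simp
  qed
  then show ?thesis by blast
qed

section \<open>MAT-freeness of a graded arrangement\<close>

lemma MAT_free_by_levels: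
  fixes f :: "'a \<Rightarrow> (nat \<Rightarrow> rat) set" and level :: "'a \<Rightarrow> nat"
  assumes X: "finite X" "inj_on f X"
    and level_pos: "\<And>x. x \<in> X \<Longrightarrow> 0 < level x"
    and level_down: "\<And>x t. x \<in> X \<Longrightarrow> 0 < t \<Longrightarrow> t \<le> level x \<Longrightarrow> \<exists>y\<in>X. level y = t"
    and indep: "\<And>x. x \<in> X \<Longrightarrow> indep_hyps m (f ` {y\<in>X. level y = level x})"
    and new_point: "\<And>x. x \<in> X \<Longrightarrow>
      \<not> ambient m \<inter> \<Inter>(f ` {y\<in>X. level y = level x}) \<subseteq> \<Union>(f ` {y\<in>X. level y < level x})"
    and count: "\<And>x. x \<in> X \<Longrightarrow>
      card (f ` {y\<in>X. level y < level x}) - card ((\<lambda>H'. f x \<inter> H') ` f ` {y\<in>X. level y < level x})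
        = level x - 1"
  shows "MAT_free m (f ` X)"
proof -
  define M where "M = Max (insert 0 (level ` X))"
  define block where "block t = f ` {y\<in>X. level y = Suc t}" for t
  define ps where "ps = map block [0..<M]"
  have level_le_M: "level x \<le> M" if "x \<in> X" for x
    unfolding M_def using X(1) that by simp
  have block_nonempty: "block t \<noteq> {}" if t: "t < M" for t
  proof -
    have "M \<in> insert 0 (level ` X)" unfolding M_def using X(1) by (intro Max_in) auto
    then obtain x where "x \<in> X" "level x = M" using t by auto
    then obtain y where "y \<in> X" "level y = Suc t" using level_down[of x "Suc t"] t by auto
    then show ?thesis unfolding block_def by blast
  qed
  have union_take: "\<Union>(set (take t ps)) = f ` {y\<in>X. level y < Suc t}" if "t \<le> M" for t
  proof -
    have "\<Union>(set (take t ps)) = (\<Union>i<t. block i)"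
      unfolding ps_def using that by (auto simp: take_map)
    also have "\<dots> = f ` (\<Union>i<t. {y\<in>X. level y = Suc i})"
      unfolding block_def by (simp add: image_UN)
    also have "(\<Union>i<t. {y\<in>X. level y = Suc i}) = {y\<in>X. level y < Suc t}"
    proof (intro equalityI subsetI)
      fix y assume "y \<in> {y\<in>X. level y < Suc t}"
      moreover from this have "0 < level y" using level_pos by blast
      ultimately have "y \<in> X" "level y = Suc (level y - 1)" "level y - 1 < t" by auto
      then show "y \<in> (\<Union>i<t. {y\<in>X. level y = Suc i})" by blast
    qed auto
    finally show ?thesis .
  qed
  have partition: "ordered_partition (f ` X) ps"
    unfolding ordered_partition_def
  proof (intro conjI ballI allI impI)
    fix p assume "p \<in> set ps"
    then show "p \<noteq> {}" unfolding ps_def using block_nonempty by auto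
  next
    fix i j assume "i < length ps" "j < length ps" "i \<noteq> j"
    then show "ps ! i \<inter> ps ! j = {}"
      unfolding ps_def block_def using X(2) by (auto dest: inj_onD)
  next
    have "\<Union>(set ps) = \<Union>(set (take M ps))" unfolding ps_def by simp
    also have "\<dots> = f ` X" using union_take[of M] level_le_M by (auto simp: less_Suc_eq_le)
    finally show "\<Union>(set ps) = f ` X" .
  qed
  have "let Ak = \<Union>(set (take t ps)); p = ps ! t in
        indep_hyps m p \<and> \<not> (ambient m \<inter> \<Inter>p \<subseteq> \<Union>Ak) \<and>
        (\<forall>H\<in>p. card Ak - card ((\<lambda>H'. H \<inter> H') ` Ak) = t)"
    if t: "t < length ps" for t
  proof -
    have "t < M" using t unfolding ps_def by simp
    then obtain x where x: "x \<in> X" "level x = Suc t" using block_nonempty unfolding block_def by auto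
    have p: "ps ! t = f ` {y\<in>X. level y = level x}"
      unfolding ps_def block_def using \<open>t < M\<close> x(2) by simp
    have Ak: "\<Union>(set (take t ps)) = f ` {y\<in>X. level y < level x}"
      using union_take[of t] \<open>t < M\<close> x(2) by simp
    have "card (f ` {y\<in>X. level y < level x}) - card ((\<lambda>H'. H \<inter> H') ` f ` {y\<in>X. level y < level x}) = t"
      if H: "H \<in> f ` {y\<in>X. level y = level x}" for H
    proof -
      obtain y where "y \<in> X" "level y = level x" "H = f y" using H by blast
      then show ?thesis using count[of y] x(2) by simp
    qed
    then show ?thesis unfolding Let_def p Ak using indep[OF x(1)] new_point[OF x(1)] by blast
  qed
  then show ?thesis unfolding MAT_free_def using partition by blast
qed

lemma card_minus_card_image_eq:
  assumes "finite A" "S \<subseteq> A" "inj_on g (A - S)" "g ` S \<subseteq> g ` (A - S)"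
  shows "card A - card (g ` A) = card S"
proof -
  have "g ` A = g ` (A - S)" using assms(2,4) by blast
  then have "card (g ` A) = card A - card S"
    using card_image[OF assms(3)] card_Diff_subset[OF finite_subset[OF assms(2,1)] assms(2)] by simp
  then show ?thesis using card_mono[OF assms(1,2)] by simp
qed

section \<open>Residues in windows of consecutive integers\<close>

lemma eq_if_mod_eq_and_close:
  fixes x y s :: nat
  assumes "x mod s = y mod s" "x < y + s" "y < x + s"
  shows "x = y"
proof -
  have "x = y" if h: "x mod s = y mod s" "x \<le> y" "y < x + s" for x y
  proof -
    obtain q where "y = x + s * q" using mod_eq_nat2E[OF h(1,2)] .
    with h(3) show "x = y" by (cases q) auto
  qed
  from this[of x y] this[of y x] assms show ?thesis by (cases "x \<le> y") auto
qed

lemma card_residue_window_le_1: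
  fixes a b s r :: nat
  assumes "b < a + s"
  shows "card {j \<in> {a..b}. j mod s = r} \<le> 1"
proof -
  have "x = y" if "x \<in> {j \<in> {a..b}. j mod s = r}" "y \<in> {j \<in> {a..b}. j mod s = r}" for x y
    using that assms by (intro eq_if_mod_eq_and_close[of x s y]) auto
  then show ?thesis by (simp add: card_le_Suc0_iff_eq)
qed

lemma card_residue_window_eq_1:
  fixes a b s r :: nat
  assumes "r < s" "b + 1 = a + s"
  shows "card {j \<in> {a..b}. j mod s = r} = 1"
proof -
  have "inj_on (\<lambda>j. j mod s) {a..b}"
  proof (rule inj_onI)
    fix x y assume "x \<in> {a..b}" "y \<in> {a..b}" "x mod s = y mod s"
    then show "x = y" using assms(2) by (intro eq_if_mod_eq_and_close[of x s y]) auto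
  qed
  then have "card ((\<lambda>j. j mod s) ` {a..b}) = card {..<s}"
    using assms(2) by (simp add: card_image)
  moreover have "(\<lambda>j. j mod s) ` {a..b} \<subseteq> {..<s}" using assms(1) by auto
  ultimately have "(\<lambda>j. j mod s) ` {a..b} = {..<s}" by (simp add: card_subset_eq)
  then have "r \<in> (\<lambda>j. j mod s) ` {a..b}" using assms(1) by simp
  then obtain j where "j \<in> {a..b}" "j mod s = r" by blast
  then have "0 < card {j \<in> {a..b}. j mod s = r}" by (subst card_gt_0_iff) auto
  moreover have "card {j \<in> {a..b}. j mod s = r} \<le> 1"
    using assms by (intro card_residue_window_le_1) simp
  ultimately show ?thesis by simp
qed

lemma card_residue_window_short:
  fixes a b s r :: nat
  assumes "r < s" "b + 2 = a + s"
  shows "card {j \<in> {a..b}. j mod s = r} = (if (b + 1) mod s = r then 0 else 1)"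
proof -
  have "{j \<in> {a..b + 1}. j mod s = r} =
      (if (b + 1) mod s = r then insert (b + 1) {j \<in> {a..b}. j mod s = r} else {j \<in> {a..b}. j mod s = r})"
    using assms by (auto simp: le_Suc_eq)
  moreover have "card {j \<in> {a..b + 1}. j mod s = r} = 1"
    using assms by (intro card_residue_window_eq_1) auto
  ultimately show ?thesis by (auto split: if_splits)
qed

lemma window_ends_mod_eq_iff:
  fixes a b a' b' c s :: nat
  assumes "a \<le> c" "c \<le> b" "a' \<le> c" "c \<le> b'" "b + 2 = a + s" "b' + 2 = a' + s"
  shows "(b' + 1) mod s = (b + 1) mod s \<longleftrightarrow> b' = b"
proof
  assume "(b' + 1) mod s = (b + 1) mod s"
  moreover have "b' + 1 < b + 1 + s" "b + 1 < b' + 1 + s" using assms by linarith+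
  ultimately have "b' + 1 = b + 1" by (rule eq_if_mod_eq_and_close)
  then show "b' = b" by simp
qed simp

lemma Min_atLeastAtMost_nat [simp]: "(a::nat) \<le> b \<Longrightarrow> Min {a..b} = a"
  by (rule Min_eqI) auto

lemma Max_atLeastAtMost_nat [simp]: "(a::nat) \<le> b \<Longrightarrow> Max {a..b} = b"
  by (rule Max_eqI) auto

section \<open>Connected sets of the almost-path graph\<close>

locale almost_path =
  fixes n k :: nat
  assumes "1 \<le> k" and k_le: "k \<le> n"
begin

abbreviation adj :: "nat \<Rightarrow> nat \<Rightarrow> bool" where
  "adj \<equiv> almost_path_adj n k"

abbreviation edges_in :: "nat set \<Rightarrow> (nat \<times> nat) set" where
  "edges_in I \<equiv> {(a, b). a \<in> I \<and> b \<in> I \<and> adj a b}"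

lemma adj_cases:
  assumes "adj u v"
  obtains "1 \<le> u" "u + 1 \<le> n" "v = u + 1"
  | "1 \<le> v" "v + 1 \<le> n" "u = v + 1"
  | "u = k" "v = n + 1"
  | "u = n + 1" "v = k"
  using assms k_le unfolding almost_path_adj_def by fastforce

lemma adj_succ: "1 \<le> u \<Longrightarrow> u + 1 \<le> n \<Longrightarrow> adj u (u + 1) \<and> adj (u + 1) u"
  unfolding almost_path_adj_def by auto

lemma adj_root: "adj k (n + 1) \<and> adj (n + 1) k"
  unfolding almost_path_adj_def by auto

lemma path_in_interval:
  assumes "{a..b} \<subseteq> I" "1 \<le> a" "b \<le> n" "u \<in> {a..b}" "v \<in> {a..b}"
  shows "(u, v) \<in> (edges_in I)\<^sup>*"
proof -
  have walk: "(u, u + d) \<in> (edges_in I)\<^sup>* \<and> (u + d, u) \<in> (edges_in I)\<^sup>*"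
    if "u \<in> {a..b}" "u + d \<le> b" for u d
    using that(2)
  proof (induction d)
    case (Suc d)
    then have step: "(u + d, u + d + 1) \<in> edges_in I" "(u + d + 1, u + d) \<in> edges_in I"
      using adj_succ[of "u + d"] assms(1-3) that(1) by auto
    have "(u, u + d) \<in> (edges_in I)\<^sup>*" "(u + d, u) \<in> (edges_in I)\<^sup>*"
      using Suc by simp_all
    then show ?case
      using rtrancl_into_rtrancl[OF _ step(1)] converse_rtrancl_into_rtrancl[OF step(2)] by simp
  qed simp
  show ?thesis
  proof (cases "u \<le> v")
    case True
    then show ?thesis using walk[of u "v - u"] assms(4,5) by simp
  next
    case False
    then show ?thesis using walk[of v "u - v"] assms(4,5) by simp
  qed
qed

lemma interval_in_conn_sets:
  "1 \<le> a \<Longrightarrow> a \<le> b \<Longrightarrow> b \<le> n \<Longrightarrow> {a..b} \<in> conn_sets n k"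
  unfolding conn_sets_def induced_connected_def using path_in_interval[of a b "{a..b}"] by auto

lemma root_in_conn_sets: "{n + 1} \<in> conn_sets n k"
  unfolding conn_sets_def induced_connected_def by auto

lemma star_in_conn_sets:
  assumes "1 \<le> a" "a \<le> k" "k \<le> b" "b \<le> n"
  shows "insert (n + 1) {a..b} \<in> conn_sets n k"
proof -
  let ?I = "insert (n + 1) {a..b}"
  have interval: "(u, v) \<in> (edges_in ?I)\<^sup>*" if "u \<in> {a..b}" "v \<in> {a..b}" for u v
    using path_in_interval[of a b ?I u v] assms that by auto
  have root: "(k, n + 1) \<in> edges_in ?I" "(n + 1, k) \<in> edges_in ?I"
    using adj_root assms by auto
  have "(u, v) \<in> (edges_in ?I)\<^sup>*" if "u \<in> ?I" "v \<in> ?I" for u v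
  proof -
    have k: "k \<in> {a..b}" using assms by auto
    have "(u, v) \<in> (edges_in ?I)\<^sup>*" if "u = n + 1" "v \<in> {a..b}"
      using converse_rtrancl_into_rtrancl[OF root(2) interval[OF k that(2)]] that(1) by simp
    moreover have "(u, v) \<in> (edges_in ?I)\<^sup>*" if "u \<in> {a..b}" "v = n + 1"
      using rtrancl_into_rtrancl[OF interval[OF that(1) k] root(1)] that(2) by simp
    ultimately show ?thesis using that interval by blast
  qed
  then show ?thesis using assms unfolding conn_sets_def induced_connected_def by auto
qed

lemma conn_sets_subset: "I \<in> conn_sets n k \<Longrightarrow> I \<subseteq> {1..n + 1}"
  unfolding conn_sets_def by auto

lemma conn_sets_nonempty: "I \<in> conn_sets n k \<Longrightarrow> I \<noteq> {}"
  unfolding conn_sets_def induced_connected_def by auto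

lemma conn_sets_path: "I \<in> conn_sets n k \<Longrightarrow> u \<in> I \<Longrightarrow> v \<in> I \<Longrightarrow> (u, v) \<in> (edges_in I)\<^sup>*"
  unfolding conn_sets_def induced_connected_def by auto

lemma finite_conn_sets: "finite (conn_sets n k)"
proof -
  have "conn_sets n k \<subseteq> Pow {1..n + 1}" using conn_sets_subset by blast
  then show ?thesis by (rule finite_subset) simp
qed

lemma finite_conn_set: "I \<in> conn_sets n k \<Longrightarrow> finite I"
  using conn_sets_subset finite_subset by blast

lemma card_conn_sets_pos: "I \<in> conn_sets n k \<Longrightarrow> 0 < card I"
  using conn_sets_nonempty conn_sets_subset finite_subset by (metis card_gt_0_iff finite_atLeastAtMost)

lemma walk_avoiding_stays_below:
  assumes "(u, x) \<in> (edges_in I)\<^sup>*" "w \<notin> I" "u < w" "k \<le> w"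
  shows "x < w \<or> x = n + 1"
  using assms(1)
proof (induction rule: rtrancl_induct)
  case (step y z)
  then have "adj y z" "z \<noteq> w" using assms(2) by auto
  then show ?case using step.IH assms(4) by (cases rule: adj_cases) auto
qed (use assms(3) in simp)

lemma walk_avoiding_stays_above:
  assumes "(u, x) \<in> (edges_in I)\<^sup>*" "w \<notin> I" "w < u" "w < k"
  shows "w < x \<or> x = n + 1"
  using assms(1)
proof (induction rule: rtrancl_induct)
  case (step y z)
  then have "adj y z" "z \<noteq> w" using assms(2) by auto
  then show ?case using step.IH assms(4) by (cases rule: adj_cases) auto
qed (use assms(3) in simp)

lemma conn_sets_convex:
  assumes I: "I \<in> conn_sets n k" and "u \<in> I" "v \<in> I" "u \<le> w" "w \<le> v" "v \<le> n"
  shows "w \<in> I"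
proof (rule ccontr)
  assume "w \<notin> I"
  then have "u < w" "w < v" using assms(2-5) by (auto simp: order.order_iff_strict)
  show False
  proof (cases "k \<le> w")
    case True
    then show False
      using walk_avoiding_stays_below[OF conn_sets_path[OF I assms(2,3)] \<open>w \<notin> I\<close> \<open>u < w\<close>]
        \<open>w < v\<close> assms(6) by simp
  next
    case False
    then show False
      using walk_avoiding_stays_above[OF conn_sets_path[OF I assms(3,2)] \<open>w \<notin> I\<close> \<open>w < v\<close>]
        \<open>u < w\<close> \<open>w < v\<close> assms(6) by simp
  qed
qed

lemma conn_sets_root_neighbour:
  assumes I: "I \<in> conn_sets n k" and "n + 1 \<in> I" "u \<in> I" "u \<noteq> n + 1"
  shows "k \<in> I"
proof -
  have "x \<noteq> n + 1 \<or> k \<in> I" if "(u, x) \<in> (edges_in I)\<^sup>*" for x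
    using that
  proof (induction rule: rtrancl_induct)
    case (step y z)
    then show ?case by (auto elim: adj_cases)
  qed (use assms(4) in simp)
  then show ?thesis using conn_sets_path[OF I assms(3,2)] by blast
qed

lemma conn_sets_cases:
  assumes I: "I \<in> conn_sets n k"
  obtains (interval) a b where "1 \<le> a" "a \<le> b" "b \<le> n" "I = {a..b}"
  | (root) "I = {n + 1}"
  | (star) a b where "1 \<le> a" "a \<le> k" "k \<le> b" "b \<le> n" "I = insert (n + 1) {a..b}"
proof -
  define J where "J = I - {n + 1}"
  have J_sub: "J \<subseteq> {1..n}" using conn_sets_subset[OF I] unfolding J_def by auto
  have I_eq: "I = (if n + 1 \<in> I then insert (n + 1) J else J)" unfolding J_def by auto
  show thesis
  proof (cases "J = {}")
    case True
    then have "I \<subseteq> {n + 1}" unfolding J_def by simp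
    then show thesis using root conn_sets_nonempty[OF I] by (simp add: subset_singleton_iff)
  next
    case False
    define a b where "a = Min J" and "b = Max J"
    have fin: "finite J" using J_sub finite_subset by auto
    then have ab: "a \<in> J" "b \<in> J" using False unfolding a_def b_def by simp_all
    then have range: "1 \<le> a" "a \<le> b" "b \<le> n"
      using J_sub fin unfolding a_def b_def by auto
    have "J = {a..b}"
    proof (intro equalityI subsetI)
      fix w assume w: "w \<in> {a..b}"
      have "a \<in> I" "b \<in> I" using ab unfolding J_def by simp_all
      then have "w \<in> I" using conn_sets_convex[OF I, of a b w] w range by simp
      then show "w \<in> J" using w range unfolding J_def by simp
    qed (use fin a_def b_def in simp)
    show thesis
    proof (cases "n + 1 \<in> I")
      case True
      have "a \<in> I" "a \<noteq> n + 1" using ab unfolding J_def by simp_all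
      then have "k \<in> J" using conn_sets_root_neighbour[OF I True] k_le unfolding J_def by simp
      then have "a \<le> k" "k \<le> b" using \<open>J = {a..b}\<close> by simp_all
      then show thesis using star[of a b] range True I_eq \<open>J = {a..b}\<close> by simp
    next
      case False
      then show thesis using interval[of a b] range I_eq \<open>J = {a..b}\<close> by simp
    qed
  qed
qed

lemma conn_subsets_of_each_size:
  assumes I: "I \<in> conn_sets n k" and "0 < t" "t \<le> card I"
  obtains J where "J \<in> conn_sets n k" "J \<subseteq> I" "card J = t"
proof -
  have "\<exists>J \<in> conn_sets n k. J \<subseteq> I \<and> card J = t"
    using I
  proof (cases rule: conn_sets_cases)
    case (interval a b)
    then have "{a..a + t - 1} \<in> conn_sets n k" "{a..a + t - 1} \<subseteq> I" "card {a..a + t - 1} = t"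
      using assms(2,3) by (auto intro: interval_in_conn_sets)
    then show ?thesis by blast
  next
    case root
    then show ?thesis using I assms(2,3) by auto
  next
    case (star a b)
    show ?thesis
    proof (cases "t = card I")
      case False
      then have "t \<le> b + 1 - a" using star assms(3) by auto
      then have "{a..a + t - 1} \<in> conn_sets n k" "{a..a + t - 1} \<subseteq> I" "card {a..a + t - 1} = t"
        using star assms(2) by (auto intro: interval_in_conn_sets)
      then show ?thesis by blast
    qed (use I in blast)
  qed
  then show thesis using that by blast
qed

definition residue_weight :: "nat \<Rightarrow> nat \<Rightarrow> nat \<Rightarrow> rat" where
  "residue_weight s r j = of_nat s * of_bool (j \<in> {1..n} \<and> j mod s = r) - of_bool (j \<in> {1..n + 1})"

lemma sum_residue_weight:
  assumes "J \<subseteq> {1..n + 1}"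
  shows "(\<Sum>j\<in>J. residue_weight s r j) =
    of_nat s * of_nat (card {j \<in> J. j \<le> n \<and> j mod s = r}) - of_nat (card J)"
proof -
  have "finite J" using assms finite_subset by auto
  moreover have "J \<inter> {j. j \<in> {1..n} \<and> j mod s = r} = {j \<in> J. j \<le> n \<and> j mod s = r}"
    "J \<inter> {j. j \<in> {1..n + 1}} = J" using assms by auto
  ultimately show ?thesis
    by (simp add: residue_weight_def sum_subtractf sum_distrib_left[symmetric])
qed

lemma sum_residue_weight_interval:
  assumes "1 \<le> a" "b \<le> n"
  shows "(\<Sum>j\<in>{a..b}. residue_weight s r j) =
    of_nat s * of_nat (card {j \<in> {a..b}. j mod s = r}) - of_nat (card {a..b})"
proof -
  have "(\<Sum>j\<in>{a..b}. residue_weight s r j) =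
      of_nat s * of_nat (card {j \<in> {a..b}. j \<le> n \<and> j mod s = r}) - of_nat (card {a..b})"
    by (rule sum_residue_weight) (use assms in auto)
  also have "{j \<in> {a..b}. j \<le> n \<and> j mod s = r} = {j \<in> {a..b}. j mod s = r}"
    using assms by auto
  finally show ?thesis .
qed

lemma sum_residue_weight_star:
  assumes "1 \<le> a" "b \<le> n"
  shows "(\<Sum>j\<in>insert (n + 1) {a..b}. residue_weight s r j) =
    of_nat s * of_nat (card {j \<in> {a..b}. j mod s = r}) - of_nat (card {a..b}) - 1"
proof -
  have "(\<Sum>j\<in>insert (n + 1) {a..b}. residue_weight s r j) =
      of_nat s * of_nat (card {j \<in> insert (n + 1) {a..b}. j \<le> n \<and> j mod s = r})
      - of_nat (card (insert (n + 1) {a..b}))"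
    by (rule sum_residue_weight) (use assms in auto)
  also have "{j \<in> insert (n + 1) {a..b}. j \<le> n \<and> j mod s = r} = {j \<in> {a..b}. j mod s = r}"
    using assms by auto
  also have "card (insert (n + 1) {a..b}) = card {a..b} + 1" using assms by simp
  finally show ?thesis by simp
qed

lemma sum_residue_weight_full_interval:
  assumes "1 \<le> a" "b \<le> n" "r < s" "b + 1 = a + s"
  shows "(\<Sum>j\<in>{a..b}. residue_weight s r j) = 0"
proof -
  have "card {j \<in> {a..b}. j mod s = r} = 1" using assms(3,4) by (rule card_residue_window_eq_1)
  moreover have "card {a..b} = s" using assms(4) by simp
  ultimately show ?thesis using sum_residue_weight_interval[OF assms(1,2)] by simp
qed

text \<open>The residue class mod \<open>card I\<close> just above the path part of a star \<open>I\<close>. For the root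
  \<open>I = {n + 1}\<close> the maximum of the empty set is unspecified, but then the modulus is 1.\<close>

definition top_residue :: "nat set \<Rightarrow> nat" where
  "top_residue I = (Max (I - {n + 1}) + 1) mod card I"

lemma sum_residue_weight_between_stars:
  assumes I: "I \<in> conn_sets n k" "n + 1 \<in> I" and J: "J \<in> conn_sets n k" "n + 1 \<in> J"
    and card: "card I = s" "card J = s"
  shows "(\<Sum>j\<in>J. residue_weight s (top_residue I) j) = (if J = I then - of_nat s else 0)"
  using I(1)
proof (cases rule: conn_sets_cases)
  case interval
  then show ?thesis using I(2) by simp
next
  case root
  then have "card J = 1" using card by simp
  then obtain x where "J = {x}" by (rule card_1_singletonE)
  then have "J = I" using J(2) root by simp
  then show ?thesis using root card(1) by (simp add: residue_weight_def)
next
  case (star a b)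
  have s: "b + 2 = a + s" using star card(1) by auto
  have "I - {n + 1} = {a..b}" using star by auto
  then have r: "top_residue I = (b + 1) mod s" unfolding top_residue_def card(1) using star by simp
  from J(1) show ?thesis
  proof (cases rule: conn_sets_cases)
    case interval
    then show ?thesis using J(2) by simp
  next
    case root
    then have "card J = 1" by simp
    then show ?thesis using card s star by linarith
  next
    case star': (star a' b')
    have s': "b' + 2 = a' + s" using star' card(2) by auto
    have "J = I \<longleftrightarrow> {a'..b'} = {a..b}" using star star' by (simp add: insert_ident)
    also have "\<dots> \<longleftrightarrow> b' = b" using star star' s s' by (auto simp: Icc_eq_Icc)
    also have "\<dots> \<longleftrightarrow> (b' + 1) mod s = (b + 1) mod s"
      using star star' s s' by (intro window_ends_mod_eq_iff[symmetric]) auto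
    finally have "card {j \<in> {a'..b'}. j mod s = top_residue I} = (if J = I then 0 else 1)"
      unfolding r using s s' star by (subst card_residue_window_short) auto
    moreover have "of_nat (card {a'..b'}) = (of_nat s - 1 :: rat)"
      using s' star' by (simp add: of_nat_diff)
    ultimately show ?thesis using star' sum_residue_weight_star[of a' b' s] by simp
  qed
qed

lemma sum_residue_weight_top_residue:
  assumes I: "I \<in> conn_sets n k" "n + 1 \<in> I" and J: "J \<in> conn_sets n k"
    and card: "card I = s" "card J = s"
  shows "(\<Sum>j\<in>J. residue_weight s (top_residue I) j) = (if J = I then - of_nat s else 0)"
proof (cases "n + 1 \<in> J")
  case True
  then show ?thesis using sum_residue_weight_between_stars[OF I J True card] by simp
next
  case False
  from J show ?thesis
  proof (cases rule: conn_sets_cases)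
    case (interval a b)
    have "top_residue I < s" using card_conn_sets_pos[OF I(1)] card(1) by (simp add: top_residue_def)
    moreover have "J \<noteq> I" using False I(2) by blast
    ultimately show ?thesis using interval card by (simp add: sum_residue_weight_full_interval)
  qed (use False in auto)
qed

lemma min_interval_notin:
  assumes I: "I \<in> conn_sets n k" "n + 1 \<notin> I" and J: "J \<in> conn_sets n k" "n + 1 \<notin> J"
    and "card J = card I" "Min I \<le> Min J" "J \<noteq> I"
  shows "Min I \<notin> J"
proof -
  from I obtain a b where "a \<le> b" "I = {a..b}" by (cases rule: conn_sets_cases) auto
  moreover from J obtain a' b' where "a' \<le> b'" "J = {a'..b'}" by (cases rule: conn_sets_cases) auto
  ultimately show ?thesis using assms(5-7) by auto
qed

lemma equal_size_conn_sets_independent: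
  assumes B: "B \<subseteq> {I \<in> conn_sets n k. card I = s}"
    and relation: "\<forall>j\<in>{1..n + 1}. (\<Sum>I\<in>B. d I * indicator I j) = (0::rat)"
  shows "\<forall>I\<in>B. d I = 0"
proof (rule indicators_independent_triangular)
  show "finite B" using B finite_conn_sets by (auto intro: finite_subset)
  show "\<forall>I\<in>B. I \<subseteq> {1..n + 1}" using B conn_sets_subset by blast
  let ?w = "\<lambda>I. if n + 1 \<in> I then residue_weight s (top_residue I) else indicator {Min I}"
  let ?rank = "\<lambda>I. if n + 1 \<in> I then 0 else Min I"
  show "(\<Sum>j\<in>I. ?w I j) \<noteq> 0" if "I \<in> B" for I
  proof -
    have I: "I \<in> conn_sets n k" "card I = s" using that B by auto
    show ?thesis
    proof (cases "n + 1 \<in> I")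
      case True
      then show ?thesis using sum_residue_weight_top_residue[OF I(1) True I(1) I(2) I(2)]
        card_conn_sets_pos[OF I(1)] I(2) by simp
    next
      case False
      have "Min I \<in> I" using finite_conn_set[OF I(1)] conn_sets_nonempty[OF I(1)] by (rule Min_in)
      then show ?thesis using False finite_conn_set[OF I(1)] by (simp add: sum_indicator_singleton)
    qed
  qed
  show "(\<Sum>j\<in>J. ?w I j) = 0" if "I \<in> B" "J \<in> B" "J \<noteq> I" "?rank I \<le> ?rank J" for I J
  proof -
    have I: "I \<in> conn_sets n k" "card I = s" and J: "J \<in> conn_sets n k" "card J = s"
      using that(1,2) B by auto
    show ?thesis
    proof (cases "n + 1 \<in> I")
      case True
      then show ?thesis using sum_residue_weight_top_residue[OF I(1) True J(1) I(2) J(2)] that(3) by simp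
    next
      case False
      have "Min I \<in> I" using finite_conn_set[OF I(1)] conn_sets_nonempty[OF I(1)] by (rule Min_in)
      then have "0 < Min I" using conn_sets_subset[OF I(1)] by force
      then have "n + 1 \<notin> J" "Min I \<le> Min J" using that(4) False by (auto split: if_splits)
      then have "Min I \<notin> J"
        using min_interval_notin[OF I(1) False J(1)] I(2) J(2) that(3) by simp
      then show ?thesis using False finite_conn_set[OF J(1)] by (simp add: sum_indicator_singleton)
    qed
  qed
qed (simp_all add: relation)

lemma sum_residue_weight_eq_0_iff:
  assumes s: "2 \<le> s" and I: "I \<in> conn_sets n k" "card I \<le> s"
  shows "(\<Sum>j\<in>I. residue_weight s (k mod s) j) = 0 \<longleftrightarrow> card I = s"
  using I(1)
proof (cases rule: conn_sets_cases)
  case (interval a b)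
  let ?c = "card {j \<in> {a..b}. j mod s = k mod s}"
  have sum: "(\<Sum>j\<in>I. residue_weight s (k mod s) j) = of_nat s * of_nat ?c - of_nat (card I)"
    using sum_residue_weight_interval[of a b s "k mod s"] interval by simp
  have "?c \<le> 1" using interval I(2) by (intro card_residue_window_le_1) auto
  then consider "?c = 0" | "?c = 1" by linarith
  then show ?thesis
  proof cases
    case 1
    have "card I \<noteq> s"
    proof
      assume "card I = s"
      then have "?c = 1" using interval s by (intro card_residue_window_eq_1) auto
      then show False using 1 by simp
    qed
    moreover from sum have "(\<Sum>j\<in>I. residue_weight s (k mod s) j) = - of_nat (card I)"
      unfolding 1 by simp
    ultimately show ?thesis using card_conn_sets_pos[OF I(1)] by simp
  next
    case 2
    from sum show ?thesis unfolding 2 by auto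
  qed
next
  case root
  then show ?thesis using s by (simp add: residue_weight_def)
next
  case (star a b)
  let ?c = "card {j \<in> {a..b}. j mod s = k mod s}"
  have "?c \<le> 1" using star I(2) by (intro card_residue_window_le_1) auto
  moreover have "0 < ?c" using star by (subst card_gt_0_iff) auto
  ultimately have c: "?c = 1" by linarith
  have "(\<Sum>j\<in>I. residue_weight s (k mod s) j) = of_nat s * of_nat ?c - of_nat (card {a..b}) - 1"
    using sum_residue_weight_star[of a b s "k mod s"] star by simp
  also have "\<dots> = of_nat s - of_nat (card I)" unfolding c using star by simp
  finally show ?thesis by auto
qed

text \<open>A partition of \<open>I\<close> into two connected parts is recorded by the part avoiding the anchor.\<close>

definition anchor :: "nat set \<Rightarrow> nat" where
  "anchor I = (if n + 1 \<in> I then n + 1 else Max I)"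

definition splits :: "nat set \<Rightarrow> nat set set" where
  "splits I = {J \<in> conn_sets n k. J \<subseteq> I \<and> anchor I \<notin> J \<and> I - J \<in> conn_sets n k}"

lemma anchor_mem: "I \<in> conn_sets n k \<Longrightarrow> anchor I \<in> I"
  unfolding anchor_def using conn_sets_nonempty conn_sets_subset
  by (metis Max_in finite_atLeastAtMost finite_subset)

lemma splits_interval:
  assumes "1 \<le> a" "a \<le> b" "b \<le> n"
  shows "splits {a..b} = (\<lambda>c. {a..c}) ` {a..<b}"
proof
  have anchor: "anchor {a..b} = b" unfolding anchor_def using assms by auto
  show "splits {a..b} \<subseteq> (\<lambda>c. {a..c}) ` {a..<b}"
  proof
    fix J assume "J \<in> splits {a..b}"
    then have J: "J \<in> conn_sets n k" "J \<subseteq> {a..b}" "b \<notin> J" "{a..b} - J \<in> conn_sets n k"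
      unfolding splits_def anchor by auto
    then have "n + 1 \<notin> J" using assms by auto
    with J(1) obtain x y where xy: "1 \<le> x" "x \<le> y" "y \<le> n" "J = {x..y}"
      by (cases rule: conn_sets_cases) auto
    have "x = a"
    proof (rule ccontr)
      assume "x \<noteq> a"
      then have "a \<in> {a..b} - J" "b \<in> {a..b} - J" using xy J(2,3) by auto
      then have "x \<in> {a..b} - J" using conn_sets_convex[OF J(4), of a b x] xy J(2) assms by auto
      then show False using xy by auto
    qed
    moreover have "y < b" using xy J(2,3) by auto
    ultimately show "J \<in> (\<lambda>c. {a..c}) ` {a..<b}" using xy by auto
  qed
  show "(\<lambda>c. {a..c}) ` {a..<b} \<subseteq> splits {a..b}"
  proof
    fix J assume "J \<in> (\<lambda>c. {a..c}) ` {a..<b}"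
    then obtain c where c: "a \<le> c" "c < b" "J = {a..c}" by auto
    then have "{a..b} - J = {c + 1..b}" by auto
    then show "J \<in> splits {a..b}"
      unfolding splits_def anchor using c assms by (auto intro!: interval_in_conn_sets)
  qed
qed

lemma splits_star:
  assumes ab: "1 \<le> a" "a \<le> k" "k \<le> b" "b \<le> n"
  defines "I \<equiv> insert (n + 1) {a..b}"
  shows "splits I = (\<lambda>c. {a..c}) ` {a..<k} \<union> (\<lambda>c. {c..b}) ` {k<..b} \<union> {{a..b}}"
proof
  have anchor: "anchor I = n + 1" unfolding anchor_def I_def by simp
  have I_conn: "I \<in> conn_sets n k" unfolding I_def using ab by (rule star_in_conn_sets)
  show "splits I \<subseteq> (\<lambda>c. {a..c}) ` {a..<k} \<union> (\<lambda>c. {c..b}) ` {k<..b} \<union> {{a..b}}"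
  proof
    fix J assume "J \<in> splits I"
    then have J: "J \<in> conn_sets n k" "J \<subseteq> I" "n + 1 \<notin> J" and C: "I - J \<in> conn_sets n k"
      unfolding splits_def anchor by auto
    from J(1,3) obtain x y where xy: "1 \<le> x" "x \<le> y" "y \<le> n" "J = {x..y}"
      by (cases rule: conn_sets_cases) auto
    have "a \<le> x" "y \<le> b" using xy J(2) ab unfolding I_def by auto
    have root_C: "n + 1 \<in> I - J" using J(3) unfolding I_def by simp
    show "J \<in> (\<lambda>c. {a..c}) ` {a..<k} \<union> (\<lambda>c. {c..b}) ` {k<..b} \<union> {{a..b}}"
    proof (cases "x = a \<and> y = b")
      case True
      then show ?thesis using xy by simp
    next
      case False
      then have "a \<notin> J \<or> b \<notin> J" using xy \<open>a \<le> x\<close> \<open>y \<le> b\<close> by auto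
      moreover have "a \<in> {a..b}" "b \<in> {a..b}" using ab by auto
      ultimately obtain u where "u \<in> {a..b}" "u \<notin> J" by blast
      then have u: "u \<in> I - J" "u \<noteq> n + 1" unfolding I_def using ab by auto
      have k_C: "k \<in> I - J" by (rule conn_sets_root_neighbour[OF C root_C u])
      then have "k < x \<or> y < k" using xy by auto
      then show ?thesis
      proof
        assume "k < x"
        have "y = b"
        proof (rule ccontr)
          assume "y \<noteq> b"
          then have "b \<in> I - J" using xy \<open>y \<le> b\<close> ab unfolding I_def by auto
          then have "x \<in> I - J" using conn_sets_convex[OF C k_C, of b x] \<open>k < x\<close> xy \<open>y \<le> b\<close> ab by simp
          then show False using xy by simp
        qed
        then show ?thesis using xy \<open>k < x\<close> by auto
      next
        assume "y < k"
        have "x = a"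
        proof (rule ccontr)
          assume "x \<noteq> a"
          then have "a \<in> I - J" using xy \<open>a \<le> x\<close> ab unfolding I_def by auto
          then have "x \<in> I - J" using conn_sets_convex[OF C _ k_C, of a x] \<open>y < k\<close> xy \<open>a \<le> x\<close> k_le by simp
          then show False using xy by simp
        qed
        then show ?thesis using xy \<open>y < k\<close> \<open>a \<le> x\<close> by auto
      qed
    qed
  qed
  have mem: "J \<in> splits I" if "J \<in> conn_sets n k" "J \<subseteq> {a..b}" "I - J \<in> conn_sets n k" for J
    using that ab unfolding splits_def anchor_def I_def by auto
  show "(\<lambda>c. {a..c}) ` {a..<k} \<union> (\<lambda>c. {c..b}) ` {k<..b} \<union> {{a..b}} \<subseteq> splits I"
  proof (intro Un_least subsetI)
    fix J assume "J \<in> (\<lambda>c. {a..c}) ` {a..<k}"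
    then obtain c where c: "a \<le> c" "c < k" "J = {a..c}" by auto
    have "I - J = insert (n + 1) {c + 1..b}" unfolding I_def using ab c by auto
    moreover have "insert (n + 1) {c + 1..b} \<in> conn_sets n k" using ab c by (intro star_in_conn_sets) auto
    moreover have "J \<in> conn_sets n k" using ab c by (simp add: interval_in_conn_sets)
    ultimately show "J \<in> splits I" using c ab by (intro mem) auto
  next
    fix J assume "J \<in> (\<lambda>c. {c..b}) ` {k<..b}"
    then obtain c where c: "k < c" "c \<le> b" "J = {c..b}" by auto
    have "I - J = insert (n + 1) {a..c - 1}" unfolding I_def using ab c by auto
    moreover have "insert (n + 1) {a..c - 1} \<in> conn_sets n k" using ab c by (intro star_in_conn_sets) auto
    moreover have "J \<in> conn_sets n k" using ab c by (simp add: interval_in_conn_sets)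
    ultimately show "J \<in> splits I" using c ab by (intro mem) auto
  next
    fix J assume "J \<in> {{a..b}}"
    then have "J = {a..b}" "I - J = {n + 1}" unfolding I_def using ab by auto
    then show "J \<in> splits I"
      using ab root_in_conn_sets interval_in_conn_sets[of a b] by (intro mem) auto
  qed
qed

lemma card_splits:
  assumes "I \<in> conn_sets n k"
  shows "card (splits I) = card I - 1"
  using assms
proof (cases rule: conn_sets_cases)
  case (interval a b)
  have "inj_on (\<lambda>c. {a..c}) {a..<b}" by (rule inj_onI) (auto simp: Icc_eq_Icc)
  then show ?thesis using interval by (simp add: splits_interval card_image)
next
  case root
  then have "splits I = {}" unfolding splits_def anchor_def using conn_sets_nonempty by auto
  then show ?thesis using root by simp
next
  case (star a b)
  let ?X = "(\<lambda>c. {a..c}) ` {a..<k}" and ?Y = "(\<lambda>c. {c..b}) ` {k<..b}"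
  have "inj_on (\<lambda>c. {a..c}) {a..<k}" "inj_on (\<lambda>c. {c..b}) {k<..b}"
    by (auto intro!: inj_onI simp: Icc_eq_Icc)
  then have "card ?X = k - a" "card ?Y = b - k" by (simp_all add: card_image)
  moreover have "?X \<inter> ?Y = {}" "{a..b} \<notin> ?X \<union> ?Y" using star by (auto simp: Icc_eq_Icc)
  ultimately have "card (?X \<union> ?Y \<union> {{a..b}}) = k - a + (b - k) + 1"
    by (simp add: card_Un_disjoint)
  then show ?thesis using star splits_star[of a b] by simp
qed

lemma inj_on_H_of_conn_sets: "inj_on (H_of (n + 1)) (conn_sets n k)"
proof (rule inj_onI)
  fix I J assume "I \<in> conn_sets n k" "J \<in> conn_sets n k" "H_of (n + 1) I = H_of (n + 1) J"
  then show "I = J" using H_of_eq_iff[of I "n + 1" J] conn_sets_subset by simp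
qed

lemma card_lower_minus_card_intersections:
  assumes sub: "\<I> \<subseteq> conn_sets n k"
    and lower: "\<And>I J. I \<in> \<I> \<Longrightarrow> J \<in> conn_sets n k \<Longrightarrow> J \<subseteq> I \<Longrightarrow> J \<in> \<I>"
    and I: "I \<in> \<I>"
  defines "A \<equiv> {J \<in> \<I>. card J < card I}"
  shows "card (H_of (n + 1) ` A) - card ((\<lambda>H'. H_of (n + 1) I \<inter> H') ` H_of (n + 1) ` A) = card I - 1"
proof -
  let ?H = "H_of (n + 1)"
  define g where "g J = ?H I \<inter> ?H J" for J
  have I_conn: "I \<in> conn_sets n k" using I sub by blast
  have A_conn: "A \<subseteq> conn_sets n k" using sub unfolding A_def by blast
  have fin: "finite A" using A_conn finite_conn_sets by (rule finite_subset)
  have proper: "\<not> I \<subseteq> J" if "J \<in> A" for J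
  proof
    assume "I \<subseteq> J"
    then have "card I \<le> card J" using finite_conn_set that A_conn by (intro card_mono) auto
    then show False using that unfolding A_def by simp
  qed
  have smaller: "J \<in> A" if "J \<in> \<I>" "J \<subseteq> I" "J \<noteq> I" for J
    using psubset_card_mono[OF finite_conn_set[OF I_conn]] that unfolding A_def by simp
  have splits_A: "splits I \<subseteq> A"
  proof
    fix J assume J: "J \<in> splits I"
    then have "J \<in> \<I>" "J \<subseteq> I" "anchor I \<notin> J" using lower[OF I] unfolding splits_def by auto
    then show "J \<in> A" using smaller anchor_mem[OF I_conn] by blast
  qed
  have "inj_on g (A - splits I)"
  proof (rule inj_onI, rule ccontr)
    fix J1 J2 assume J: "J1 \<in> A - splits I" "J2 \<in> A - splits I" "g J1 = g J2" "J1 \<noteq> J2"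
    then have conn: "J1 \<in> conn_sets n k" "J2 \<in> conn_sets n k" using A_conn by auto
    have "J1 \<inter> J2 = {} \<and> J1 \<union> J2 = I"
      using H_of_Int_eq_iff_split[of I "n + 1" J1 J2] conn_sets_subset[OF I_conn]
        conn_sets_subset[OF conn(1)] conn_sets_subset[OF conn(2)] proper J unfolding g_def by simp
    then have "I - J1 = J2" "I - J2 = J1" "J1 \<subseteq> I" "J2 \<subseteq> I" by auto
    then have "J2 \<in> splits I \<or> J1 \<in> splits I"
      using conn \<open>J1 \<inter> J2 = {} \<and> J1 \<union> J2 = I\<close> unfolding splits_def by auto
    then show False using J(1,2) by blast
  qed
  moreover have "g ` splits I \<subseteq> g ` (A - splits I)"
  proof
    fix X assume "X \<in> g ` splits I"
    then obtain J where J: "J \<in> splits I" "X = g J" by blast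
    then have C: "I - J \<in> conn_sets n k" "J \<subseteq> I" "J \<in> conn_sets n k" unfolding splits_def by auto
    have "I - J \<noteq> I" using C(2) conn_sets_nonempty[OF C(3)] by blast
    then have "I - J \<in> A" using lower[OF I C(1)] smaller by blast
    moreover have "I - J \<notin> splits I" using anchor_mem[OF I_conn] J(1) unfolding splits_def by auto
    moreover have "g J = g (I - J)"
      unfolding g_def using C(2) finite_conn_set[OF I_conn] by (intro H_of_Int_split) auto
    ultimately show "X \<in> g ` (A - splits I)" using J by blast
  qed
  ultimately have "card A - card (g ` A) = card (splits I)"
    using fin splits_A by (intro card_minus_card_image_eq)
  moreover have "card (?H ` A) = card A"
    using inj_on_subset[OF inj_on_H_of_conn_sets A_conn] by (rule card_image)
  moreover have "(\<lambda>H'. ?H I \<inter> H') ` ?H ` A = g ` A" unfolding g_def by (rule image_image)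
  ultimately show ?thesis using card_splits[OF I_conn] by simp
qed

lemma indep_hyps_equal_size:
  assumes "B \<subseteq> {I \<in> conn_sets n k. card I = s}"
  shows "indep_hyps (n + 1) (H_of (n + 1) ` B)"
proof (rule indep_hyps_H_of)
  show "B \<subseteq> Pow {1..n + 1}" "{} \<notin> B" using assms conn_sets_subset conn_sets_nonempty by blast+
  show "finite B" using assms finite_conn_sets by (auto intro: finite_subset)
qed (use equal_size_conn_sets_independent[OF assms] in blast)

lemma residue_weight_in_ambient: "residue_weight s r \<in> ambient (n + 1)"
  unfolding ambient_def residue_weight_def by auto

lemma new_point_of_size:
  assumes "\<I> \<subseteq> conn_sets n k" "I \<in> \<I>"
  shows "\<not> ambient (n + 1) \<inter> \<Inter>(H_of (n + 1) ` {J \<in> \<I>. card J = card I})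
    \<subseteq> \<Union>(H_of (n + 1) ` {J \<in> \<I>. card J < card I})"
proof (cases "card I = 1")
  case True
  then have "{J \<in> \<I>. card J < card I} = {}" using assms(1) card_conn_sets_pos by fastforce
  moreover have "(\<lambda>_. 0) \<in> ambient (n + 1) \<inter> \<Inter>(H_of (n + 1) ` {J \<in> \<I>. card J = card I})"
    unfolding ambient_def H_of_def by auto
  ultimately show ?thesis by blast
next
  case False
  define s where "s = card I"
  have "2 \<le> s" using False card_conn_sets_pos assms unfolding s_def by fastforce
  let ?x = "residue_weight s (k mod s)"
  have "?x \<in> H_of (n + 1) J \<longleftrightarrow> card J = s" if "J \<in> \<I>" "card J \<le> s" for J
    using sum_residue_weight_eq_0_iff[OF \<open>2 \<le> s\<close>, of J] that assms(1) residue_weight_in_ambient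
    unfolding H_of_def by auto
  then have "?x \<in> ambient (n + 1) \<inter> \<Inter>(H_of (n + 1) ` {J \<in> \<I>. card J = s})"
    "?x \<notin> \<Union>(H_of (n + 1) ` {J \<in> \<I>. card J < s})"
    using residue_weight_in_ambient by auto
  then show ?thesis unfolding s_def by blast
qed

end

theorem mainTheorem13:
  fixes n k :: nat and \<I> :: "nat set set"
  assumes "1 \<le> k" and "k \<le> n"
    and "\<I> \<subseteq> conn_sets n k"
    and "\<And>I J. I \<in> \<I> \<Longrightarrow> J \<in> conn_sets n k \<Longrightarrow> J \<subseteq> I \<Longrightarrow> J \<in> \<I>"
  shows "MAT_free (n + 1) (H_of (n + 1) ` \<I>)"
proof -
  interpret almost_path n k using assms(1,2) by unfold_locales
  show ?thesis
  proof (rule MAT_free_by_levels[where level = card])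
    show "finite \<I>" using assms(3) finite_conn_sets by (rule finite_subset)
    show "inj_on (H_of (n + 1)) \<I>" using inj_on_H_of_conn_sets assms(3) by (rule inj_on_subset)
    fix I assume I: "I \<in> \<I>"
    then have I_conn: "I \<in> conn_sets n k" using assms(3) by blast
    show "0 < card I" using card_conn_sets_pos[OF I_conn] .
    show "\<exists>J\<in>\<I>. card J = t" if "0 < t" "t \<le> card I" for t
      by (rule conn_subsets_of_each_size[OF I_conn that]) (use assms(4)[OF I] in blast)
    show "indep_hyps (n + 1) (H_of (n + 1) ` {J \<in> \<I>. card J = card I})"
      using assms(3) by (intro indep_hyps_equal_size) blast
    show "\<not> ambient (n + 1) \<inter> \<Inter>(H_of (n + 1) ` {J \<in> \<I>. card J = card I})
        \<subseteq> \<Union>(H_of (n + 1) ` {J \<in> \<I>. card J < card I})"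
      using assms(3) I by (rule new_point_of_size)
    show "card (H_of (n + 1) ` {J \<in> \<I>. card J < card I})
        - card ((\<lambda>H'. H_of (n + 1) I \<inter> H') ` H_of (n + 1) ` {J \<in> \<I>. card J < card I}) = card I - 1"
      using assms(3,4) I by (rule card_lower_minus_card_intersections)
  qed
qed

end
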